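(* Let $a,u\in\mathbb Z$ with $a\ge2$, $|u|\le a$, and let $n$ be a sufficiently large positive integer. Then all $a$ roots of the polynomial $p_u(\tau)=e^{i\pi u}n(\tau-1)^a-\tau^{a-1}$ are given by the (convergent) asymptotic expansions $$\tau_k(u)=1+\sum_{m=1}^\infty\frac{(2-m/a)_{m-1}}{m!}\cdot\frac{e^{\frac{m(2\pi k-\pi u)i}{a}}}{n^{m/a}},\qquad k=0,1,\ldots,a-1.$$
   Context: $(\lambda)_0=1$, $(\lambda)_m=\lambda(\lambda+1)\cdots(\lambda+m-1)$ is the Pochhammer symbol. *)

theory Defs
  imports "HOL-Analysis.Analysis"
begin

definition p_poly :: "int \<Rightarrow> int \<Rightarrow> nat \<Rightarrow> complex \<Rightarrow> complex" where
  "p_poly a u n \<tau> = exp (\<i> * of_real (pi * real_of_int u)) * of_nat n * (\<tau> - 1) ^ nat a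
                     - \<tau> ^ (nat a - 1)"

definition exp_term :: "int \<Rightarrow> int \<Rightarrow> nat \<Rightarrow> nat \<Rightarrow> nat \<Rightarrow> complex" where
  "exp_term a u n k m =
     of_real (pochhammer (2 - real m / real_of_int a) (m - 1) / fact m)
     * exp (\<i> * of_real (real m * (2 * pi * real k - pi * real_of_int u) / real_of_int a))
     / of_real (real n powr (real m / real_of_int a))"

end

theory Submission
  imports Defs
begin

text \<open>
  Write \<open>A = a\<close>, \<open>c = e^{i\<pi>u}\<close> and \<open>\<tau> = 1 + w\<close>. Then \<open>p_u(\<tau>) = 0\<close> becomes
  \<open>w\<^sup>A = \<epsilon>\<^sup>A (1 + w)\<^bsup>A-1\<^esup>\<close> with \<open>\<epsilon>\<^sup>A = 1/(c n)\<close>, i.e. \<open>\<epsilon> = w / \<phi>(w)\<close> for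
  \<open>\<phi>(w) = (1 + w)\<^bsup>(A-1)/A\<^esup>\<close>. Lagrange inversion solves this by a power series \<open>w = W(\<epsilon>)\<close>
  whose coefficients are exactly those of the expansion, and they are bounded by \<open>4\<^sup>m\<close>.
  Plugging in the \<open>A\<close> choices \<open>\<epsilon>\<^sub>k = e^{i(2\<pi>k-\<pi>u)/A} n^{-1/A}\<close> gives \<open>A\<close> roots; since
  \<open>W(\<epsilon>) = \<epsilon> + O(\<epsilon>\<^sup>2)\<close>, they are distinct once \<open>n\<close> is large, so they are all the roots
  of the degree-\<open>A\<close> polynomial \<open>p_u\<close>.
\<close>

no_notation vec_nth (infixl \<open>$\<close> 90)
notation fps_nth (infixl \<open>$\<close> 75)

subsection \<open>Lagrange inversion\<close>

lemma fps_compose_mult_nth: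
  fixes A F G :: "'a::idom fps"
  assumes F0: "F $ 0 = 0"
  shows "((A oo F) * G) $ N = (\<Sum>i=0..N. A $ i * (F ^ i * G) $ N)"
proof -
  have F_power_nth: "(F ^ i) $ j = 0" if "j < i" for i j
    using startsby_zero_power_prefix[OF F0] that by blast
  have compose_nth: "(A oo F) $ j = (\<Sum>i=0..N. A $ i * (F ^ i) $ j)" if "j \<le> N" for j
    unfolding fps_compose_nth
    by (rule sum.mono_neutral_left) (use that F_power_nth in auto)
  have "((A oo F) * G) $ N = (\<Sum>j=0..N. (\<Sum>i=0..N. A $ i * (F ^ i) $ j) * G $ (N - j))"
    unfolding fps_mult_nth by (rule sum.cong) (auto simp: compose_nth)
  also have "\<dots> = (\<Sum>i=0..N. \<Sum>j=0..N. A $ i * ((F ^ i) $ j * G $ (N - j)))"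
    by (subst sum.swap) (simp add: sum_distrib_right mult.assoc)
  also have "\<dots> = (\<Sum>i=0..N. A $ i * (F ^ i * G) $ N)"
    by (simp add: fps_mult_nth sum_distrib_left)
  finally show ?thesis .
qed

text \<open>
  The residue computation behind Lagrange inversion: with \<open>F = X/\<phi>\<close>, the series
  \<open>F\<^sup>i F' \<phi>\<^bsup>i+1+p\<^esup>\<close> is \<open>X\<^sup>i (\<phi>\<^sup>p - X (\<phi>\<^sup>p)'/p)\<close>, whose coefficient of \<open>X\<^bsup>i+p\<^esup>\<close>
  vanishes for \<open>p > 0\<close>.
\<close>
lemma lagrange_inversion_residue:
  fixes \<phi> :: "'a::field_char_0 fps"
  assumes \<phi>0: "\<phi> $ 0 \<noteq> 0"
  shows "((fps_X * inverse \<phi>) ^ i * fps_deriv (fps_X * inverse \<phi>) * \<phi> ^ (i + 1 + p)) $ (i + p)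
         = (if p = 0 then 1 else 0)"
proof -
  define U where "U = inverse \<phi>"
  have U\<phi>: "U * \<phi> = 1" unfolding U_def by (rule inverse_mult_eq_1) (simp add: \<phi>0)
  have U\<phi>_power: "U ^ i * \<phi> ^ i = 1" by (metis U\<phi> power_mult_distrib power_one)
  define H where "H = \<phi> ^ p + fps_X * (fps_deriv U * \<phi> ^ (p + 1))"
  have "(fps_X * U) ^ i * fps_deriv (fps_X * U) * \<phi> ^ (i + 1 + p)
        = fps_X ^ i * ((U ^ i * \<phi> ^ i) * ((U * \<phi>) * \<phi> ^ p + fps_X * (fps_deriv U * \<phi> ^ (p+1))))"
    by (simp add: power_mult_distrib power_add algebra_simps)
  also have "\<dots> = fps_X ^ i * H" unfolding H_def U\<phi>_power U\<phi> by simp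
  finally have eq_H: "(fps_X * U) ^ i * fps_deriv (fps_X * U) * \<phi> ^ (i + 1 + p) = fps_X ^ i * H" .
  have "H $ p = (if p = 0 then 1 else 0)"
  proof (cases p)
    case 0
    then show ?thesis by (simp add: H_def U_def \<phi>0)
  next
    case (Suc q)
    have "fps_deriv U = - fps_deriv \<phi> * U\<^sup>2"
      unfolding U_def by (rule fps_inverse_deriv) (simp add: \<phi>0)
    then have "fps_deriv U * \<phi> ^ (p + 1) = - fps_deriv \<phi> * \<phi> ^ q * (U * \<phi>)\<^sup>2"
      by (simp add: Suc power2_eq_square algebra_simps)
    then have deriv_U: "fps_deriv U * \<phi> ^ (p + 1) = - fps_deriv \<phi> * \<phi> ^ q"
      by (simp add: U\<phi>)
    have "fps_deriv (\<phi> ^ p) = fps_const (of_nat p) * (fps_deriv \<phi> * \<phi> ^ q)"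
      using fps_deriv_power[of \<phi> p] by (simp add: Suc mult.assoc del: power_Suc)
    then have "(fps_deriv (\<phi> ^ p)) $ q = of_nat p * (fps_deriv \<phi> * \<phi> ^ q) $ q"
      by simp
    then have "(fps_deriv \<phi> * \<phi> ^ q) $ q = (\<phi> ^ p) $ p"
      by (simp add: Suc del: power_Suc of_nat_Suc)
    then show ?thesis using deriv_U by (simp add: H_def Suc del: power_Suc)
  qed
  then show ?thesis using eq_H unfolding U_def[symmetric]
    by (simp add: fps_X_power_mult_nth)
qed

lemma lagrange_inversion:
  fixes \<phi> :: "'a::field_char_0 fps"
  assumes \<phi>0: "\<phi> $ 0 \<noteq> 0" and n: "n > 0"
  shows "of_nat n * fps_inv (fps_X * inverse \<phi>) $ n = (\<phi> ^ n) $ (n - 1)"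
proof -
  define F where "F = fps_X * inverse \<phi>"
  define W where "W = fps_inv F"
  have F0: "F $ 0 = 0" by (simp add: F_def)
  have F1: "F $ 1 \<noteq> 0" by (simp add: F_def \<phi>0)
  have "W oo F = fps_X" unfolding W_def by (rule fps_inv[OF F0 F1])
  then have "fps_deriv (W oo F) = 1" by simp
  then have "(fps_deriv W oo F) * fps_deriv F = 1"
    by (simp add: fps_compose_deriv[OF F0])
  then have "(\<phi> ^ n) $ (n - 1) = ((fps_deriv W oo F) * (fps_deriv F * \<phi> ^ n)) $ (n - 1)"
    by (metis mult.assoc mult_1)
  also have "\<dots> = (\<Sum>i=0..n-1. fps_deriv W $ i * (F ^ i * (fps_deriv F * \<phi> ^ n)) $ (n - 1))"
    by (rule fps_compose_mult_nth[OF F0])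
  also have "\<dots> = (\<Sum>i=0..n-1. if i = n - 1 then fps_deriv W $ i else 0)"
  proof (rule sum.cong[OF refl])
    fix i assume "i \<in> {0..n-1}"
    define p where "p = n - 1 - i"
    have p: "n = i + 1 + p" using n \<open>i \<in> {0..n-1}\<close> unfolding p_def by auto
    have "(F ^ i * (fps_deriv F * \<phi> ^ n)) $ (n - 1) = (if p = 0 then 1 else 0)"
      using lagrange_inversion_residue[OF \<phi>0, of i p] unfolding F_def p by (simp add: mult.assoc)
    then show "fps_deriv W $ i * (F ^ i * (fps_deriv F * \<phi> ^ n)) $ (n - 1)
               = (if i = n - 1 then fps_deriv W $ i else 0)"
      using p by (auto simp del: fps_deriv_nth)
  qed
  also have "\<dots> = of_nat n * W $ n" using n by simp
  finally show ?thesis unfolding W_def F_def by simp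
qed

lemma fps_inv_X_mult_inverse_eq:
  fixes \<phi> :: "'a::field fps"
  assumes \<phi>0: "\<phi> $ 0 \<noteq> 0"
  defines "W \<equiv> fps_inv (fps_X * inverse \<phi>)"
  shows "W = fps_X * (\<phi> oo W)"
proof -
  have W0: "W $ 0 = 0" by (simp add: W_def fps_inv_def)
  have "(fps_X * inverse \<phi>) oo W = fps_X"
    unfolding W_def by (rule fps_inv_right) (simp_all add: \<phi>0)
  then have "W * inverse (\<phi> oo W) = fps_X"
    by (simp add: fps_compose_mult_distrib[OF W0] fps_X_fps_compose_startby0[OF W0]
        fps_inverse_compose[OF W0 \<phi>0])
  moreover have "inverse (\<phi> oo W) * (\<phi> oo W) = 1"
    by (rule inverse_mult_eq_1) (simp add: \<phi>0 W0 fps_compose_nth_0)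
  ultimately show ?thesis
    by (metis mult.assoc mult_1_right)
qed

definition root_series :: "nat \<Rightarrow> complex fps" where
  "root_series A = fps_inv (fps_X * inverse (fps_binomial (of_nat (A - 1) / of_nat A)))"

lemma root_series_nth_0 [simp]: "root_series A $ 0 = 0"
  by (simp add: root_series_def fps_inv_def)

lemma root_series_nth:
  assumes A: "A > 0" and m: "m > 0"
  shows "root_series A $ m = of_real (pochhammer (2 - real m / real A) (m - 1) / fact m)"
proof -
  have "of_nat m * root_series A $ m
        = (fps_binomial (of_nat (A - 1) / of_nat A) ^ m) $ (m - 1)"
    unfolding root_series_def by (rule lagrange_inversion[OF _ m]) simp
  also have "\<dots> = (of_nat m * (of_nat (A - 1) / of_nat A)) gchoose (m - 1)"
    by (simp add: fps_binomial_power)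
  also have "\<dots> = of_real (pochhammer (2 - real m / real A) (m - 1)) / fact (m - 1)"
  proof -
    have "of_nat m * (of_nat (A - 1) / of_nat A) - of_nat (m - 1) + 1
          = (of_real (2 - real m / real A) :: complex)"
      using A m by (simp add: of_nat_diff field_simps)
    then show ?thesis by (simp only: gbinomial_pochhammer' pochhammer_of_real)
  qed
  finally show ?thesis
    using m by (simp add: pochhammer_of_real fact_reduce field_simps)
qed

lemma root_series_equation:
  assumes A: "A > 0"
  shows "root_series A ^ A = fps_X ^ A * (1 + root_series A) ^ (A - 1)"
proof -
  define \<phi> where "\<phi> = fps_binomial (of_nat (A - 1) / of_nat A :: complex)"
  define W where "W = root_series A"
  have W0: "W $ 0 = 0" by (simp add: W_def)
  have W: "W = fps_X * (\<phi> oo W)"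
    unfolding W_def root_series_def \<phi>_def by (rule fps_inv_X_mult_inverse_eq) simp
  have "(\<phi> oo W) ^ A = \<phi> ^ A oo W" by (rule fps_compose_power[OF W0])
  also have "\<phi> ^ A = fps_binomial (of_nat (A - 1))"
    unfolding \<phi>_def fps_binomial_power using A by simp
  also have "\<dots> = (1 + fps_X) ^ (A - 1)" by (rule fps_binomial_of_nat)
  also have "\<dots> oo W = ((1 + fps_X) oo W) ^ (A - 1)"
    by (rule fps_compose_power[OF W0, symmetric])
  also have "(1 + fps_X) oo W = 1 + W" by (simp add: fps_compose_add_distrib W0)
  finally have "(\<phi> oo W) ^ A = (1 + W) ^ (A - 1)" .
  then show ?thesis
    by (metis W W_def power_mult_distrib)
qed

lemma root_series_nth_1 [simp]: "A > 0 \<Longrightarrow> root_series A $ Suc 0 = 1"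
  using root_series_nth[of A 1] by simp

subsection \<open>Convergence of the root series\<close>

lemma abs_pochhammer_le:
  fixes x y :: real
  assumes "\<bar>x\<bar> \<le> y"
  shows "\<bar>pochhammer x k\<bar> \<le> pochhammer y k"
proof (induction k)
  case 0
  then show ?case by simp
next
  case (Suc k)
  have "\<bar>pochhammer x (Suc k)\<bar> = \<bar>pochhammer x k\<bar> * \<bar>x + of_nat k\<bar>"
    by (simp add: pochhammer_Suc abs_mult)
  also have "\<dots> \<le> pochhammer y k * (y + of_nat k)"
    using Suc assms by (intro mult_mono) (auto simp: pochhammer_nonneg)
  finally show ?case by (simp add: pochhammer_Suc)
qed

text \<open>\<open>|(2 - m/A)\<^sub>m\<^sub>-\<^sub>1| \<le> (m + 2)\<^sub>m\<^sub>-\<^sub>1 = binom(2m, m-1) (m-1)! \<le> 4\<^sup>m (m-1)!\<close>\<close>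
lemma norm_root_series_nth_le:
  assumes A: "A > 0"
  shows "norm (root_series A $ m) \<le> 4 ^ m"
proof (cases "m = 0")
  case False
  then have m: "m > 0" by simp
  have "m \<le> m * A" using A by simp
  then have "real m \<le> real m * real A" by (metis of_nat_le_iff of_nat_mult)
  then have "real m / real A \<le> real m" using A by (simp add: divide_le_eq)
  moreover have "0 \<le> real m / real A" by simp
  ultimately have "\<bar>2 - real m / real A\<bar> \<le> 2 + real m" by (subst abs_le_iff) linarith
  then have "\<bar>pochhammer (2 - real m / real A) (m - 1)\<bar> \<le> pochhammer (2 + real m) (m - 1)"
    by (rule abs_pochhammer_le)
  also have "pochhammer (2 + real m) (m - 1) = real ((2 * m) choose (m - 1)) * fact (m - 1)"
    using m by (simp add: binomial_gbinomial gbinomial_pochhammer' of_nat_diff)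
  also have "\<dots> \<le> 4 ^ m * fact m"
  proof (rule mult_mono)
    have "real ((2 * m) choose (m - 1)) \<le> 2 ^ (2 * m)"
      using binomial_le_pow2 of_nat_le_iff by (metis of_nat_numeral of_nat_power)
    then show "real ((2 * m) choose (m - 1)) \<le> 4 ^ m" by (simp add: power_mult)
  qed (simp_all add: fact_mono)
  finally have "\<bar>pochhammer (2 - real m / real A) (m - 1)\<bar> \<le> 4 ^ m * fact m" .
  moreover have "norm (root_series A $ m) = \<bar>pochhammer (2 - real m / real A) (m - 1)\<bar> / fact m"
    unfolding root_series_nth[OF A m] norm_of_real by (simp add: abs_div)
  ultimately show ?thesis by (simp add: divide_le_eq)
qed simp

lemma norm_root_series_term_le:
  assumes "A > 0"
  shows "norm (root_series A $ m * z ^ m) \<le> (4 * norm z) ^ m"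
  using norm_root_series_nth_le[OF assms, of m]
  by (simp add: norm_mult norm_power power_mult_distrib mult_right_mono)

lemma root_series_conv_radius:
  assumes A: "A > 0"
  shows "fps_conv_radius (root_series A) \<ge> ereal (1/4)"
  unfolding fps_conv_radius_def
proof (rule conv_radius_geI_ex')
  fix r :: real assume r: "0 < r" "ereal r < ereal (1/4)"
  show "summable (\<lambda>n. root_series A $ n * of_real r ^ n)"
  proof (rule summable_comparison_test)
    show "\<exists>N. \<forall>n\<ge>N. norm (root_series A $ n * of_real r ^ n) \<le> (4 * norm (of_real r :: complex)) ^ n"
      using norm_root_series_term_le[OF A] by blast
    show "summable (\<lambda>n. (4 * norm (of_real r :: complex)) ^ n)"
      using r by (intro summable_geometric) simp
  qed
qed

lemma norm_less_root_series_conv_radius: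
  assumes "A > 0" "norm z < 1/4"
  shows "ereal (norm z) < fps_conv_radius (root_series A)"
proof -
  have "ereal (norm z) < ereal (1/4)" using assms(2) by simp
  then show ?thesis using root_series_conv_radius[OF assms(1)] by (rule less_le_trans)
qed

lemma root_series_sums:
  assumes "A > 0" "norm z < 1/4"
  shows "(\<lambda>m. root_series A $ Suc m * z ^ Suc m) sums eval_fps (root_series A) z"
  using sums_Suc_iff[of "\<lambda>m. root_series A $ m * z ^ m"]
    sums_eval_fps[OF norm_less_root_series_conv_radius[OF assms]]
  by simp

lemma eval_root_series_equation:
  assumes A: "A > 0" and z: "norm z < 1/4"
  shows "eval_fps (root_series A) z ^ A = z ^ A * (1 + eval_fps (root_series A) z) ^ (A - 1)"
proof -
  define W where "W = root_series A"
  have R: "norm z < fps_conv_radius W"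
    unfolding W_def by (rule norm_less_root_series_conv_radius[OF A z])
  have R1: "norm z < fps_conv_radius (1 + W)"
    using fps_conv_radius_add[of 1 W] R by (auto intro: less_le_trans)
  have R2: "norm z < fps_conv_radius ((1 + W) ^ (A - 1))"
    using fps_conv_radius_power[of "1 + W" "A - 1"] R1 by (auto intro: less_le_trans)
  have "eval_fps W z ^ A = eval_fps (W ^ A) z"
    by (rule eval_fps_power[OF R, symmetric])
  also have "\<dots> = eval_fps (fps_X ^ A * (1 + W) ^ (A - 1)) z"
    by (simp add: W_def root_series_equation[OF A])
  also have "\<dots> = z ^ A * (1 + eval_fps W z) ^ (A - 1)"
    using R R1 R2 by (simp add: eval_fps_mult eval_fps_power eval_fps_add)
  finally show ?thesis unfolding W_def .
qed

lemma eval_root_series_approx: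
  assumes A: "A > 0" and z: "norm z \<le> 1/8"
  shows "norm (eval_fps (root_series A) z - z) \<le> 32 * norm z ^ 2"
proof -
  define W where "W = root_series A"
  define q where "q = 4 * norm z"
  have q: "0 \<le> q" "q \<le> 1/2" using z by (auto simp: q_def)
  have "(\<lambda>i. W $ (i + 2) * z ^ (i + 2)) sums (eval_fps W z - (\<Sum>i<2. W $ i * z ^ i))"
    using z unfolding W_def
    by (intro sums_split_initial_segment sums_eval_fps norm_less_root_series_conv_radius A) auto
  moreover have "(\<Sum>i<2. W $ i * z ^ i) = z"
    by (simp add: numeral_2_eq_2 W_def A)
  ultimately have tail: "(\<lambda>i. W $ (i + 2) * z ^ (i + 2)) sums (eval_fps W z - z)" by simp
  have geom: "(\<lambda>i. q ^ 2 * q ^ i) sums (q ^ 2 * (1 / (1 - q)))"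
    using q by (intro sums_mult geometric_sums) auto
  have "norm (eval_fps W z - z) \<le> q ^ 2 * (1 / (1 - q))"
    unfolding sums_unique[OF tail] sums_unique[OF geom]
  proof (rule norm_suminf_le)
    show "norm (W $ (i + 2) * z ^ (i + 2)) \<le> q ^ 2 * q ^ i" for i
      using norm_root_series_term_le[OF A, of "i + 2" z]
      unfolding W_def q_def by (simp add: power_add power2_eq_square algebra_simps)
  qed (rule sums_summable[OF geom])
  also have "\<dots> \<le> q ^ 2 * 2"
    using q by (intro mult_left_mono) (auto simp: field_simps)
  finally show ?thesis by (simp add: W_def q_def power2_eq_square)
qed

lemma eval_root_series_neq:
  assumes A: "A > 0" and \<rho>: "0 < \<rho>" "\<rho> \<le> 1/8"
    and xy: "norm x \<le> 1" "norm y \<le> 1" "64 * \<rho> < norm (x - y)"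
  shows "eval_fps (root_series A) (of_real \<rho> * x) \<noteq> eval_fps (root_series A) (of_real \<rho> * y)"
proof
  assume eq: "eval_fps (root_series A) (of_real \<rho> * x) = eval_fps (root_series A) (of_real \<rho> * y)"
  have approx: "norm (eval_fps (root_series A) (of_real \<rho> * v) - of_real \<rho> * v) \<le> 32 * \<rho> ^ 2"
    if "norm v \<le> 1" for v
  proof -
    have "norm (of_real \<rho> * v) \<le> \<rho>"
      using that \<rho> by (simp add: norm_mult mult_left_le)
    then show ?thesis
      using eval_root_series_approx[OF A, of "of_real \<rho> * v"] \<rho>
      by (smt (verit) power_mono norm_ge_zero)
  qed
  have "\<rho> * norm (x - y) = norm (of_real \<rho> * x - of_real \<rho> * y)"
    using \<rho> by (simp add: norm_mult right_diff_distrib[symmetric])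
  also have "\<dots> = norm ((eval_fps (root_series A) (of_real \<rho> * y) - of_real \<rho> * y)
                    - (eval_fps (root_series A) (of_real \<rho> * x) - of_real \<rho> * x))"
    using eq by (simp add: algebra_simps)
  also have "\<dots> \<le> 64 * \<rho> ^ 2"
    using approx[OF xy(1)] approx[OF xy(2)] norm_triangle_ineq4 by (smt (verit))
  finally show False
    using xy(3) \<rho> by (simp add: power2_eq_square)
qed

subsection \<open>Factoring a polynomial through enough distinct roots\<close>

lemma poly_eq_smult_prod_roots:
  fixes p :: "'a::idom poly"
  assumes "finite S" "card S = degree p" "\<forall>z\<in>S. poly p z = 0"
  shows "p = smult (lead_coeff p) (\<Prod>z\<in>S. [:-z, 1:])"
  using assms
proof (induction S arbitrary: p rule: finite_induct)
  case empty
  then show ?case by (metis degree_0_id prod.empty smult_one card.empty)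
next
  case (insert x S)
  then obtain q where q: "p = [:-x, 1:] * q" by (metis poly_eq_0_iff_dvd dvdE insertI1)
  have "p \<noteq> 0" using insert by auto
  then have "degree p = 1 + degree q" unfolding q by (subst degree_mult_eq) auto
  then have "card S = degree q" using insert by simp
  moreover have "\<forall>z\<in>S. poly q z = 0" using insert q by auto
  ultimately have "q = smult (lead_coeff q) (\<Prod>z\<in>S. [:-z, 1:])" by (rule insert.IH)
  then have "p = [:-x, 1:] * smult (lead_coeff q) (\<Prod>z\<in>S. [:-z, 1:])" using q by simp
  also have "lead_coeff q = lead_coeff p" unfolding q lead_coeff_mult by simp
  also have "[:-x, 1:] * smult (lead_coeff p) (\<Prod>z\<in>S. [:-z, 1:])
             = smult (lead_coeff p) (\<Prod>z\<in>insert x S. [:-z, 1:])"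
    using insert by (simp add: mult_smult_right)
  finally show ?case .
qed

subsection \<open>The roots of \<open>p_u\<close>\<close>

definition root_direction :: "nat \<Rightarrow> int \<Rightarrow> nat \<Rightarrow> complex" where
  "root_direction A u k = exp (\<i> * of_real ((2 * pi * real k - pi * real_of_int u) / real A))"

lemma norm_root_direction [simp]: "norm (root_direction A u k) = 1"
  unfolding root_direction_def by (rule norm_exp_i_times)

lemma root_direction_power:
  assumes "A > 0"
  shows "exp (\<i> * of_real (pi * real_of_int u)) * root_direction A u k ^ A = 1"
proof -
  have "root_direction A u k ^ A
        = exp (\<i> * of_real (2 * pi * real k - pi * real_of_int u))"
    unfolding root_direction_def exp_of_nat_mult[symmetric] using assms by simp
  then have "exp (\<i> * of_real (pi * real_of_int u)) * root_direction A u k ^ A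
             = exp (2 * of_nat k * pi * \<i>)"
    by (simp add: exp_add[symmetric] algebra_simps)
  also have "\<dots> = 1" by (rule exp_integer_2pi) simp
  finally show ?thesis .
qed

lemma inj_on_root_direction: "inj_on (root_direction A u) {..<A}"
proof (rule inj_onI)
  fix j k assume "j \<in> {..<A}" "k \<in> {..<A}" and eq: "root_direction A u j = root_direction A u k"
  then have jk: "j < A" "k < A" by simp_all
  define \<theta> where "\<theta> i = (2 * pi * real i - pi * real_of_int u) / real A" for i
  obtain m :: int where m: "\<i> * of_real (\<theta> j) = \<i> * of_real (\<theta> k) + of_int (2 * m) * pi * \<i>"
    using eq unfolding root_direction_def \<theta>_def[symmetric] exp_eq by blast
  have "\<theta> j = \<theta> k + 2 * of_int m * pi"
    using arg_cong[OF m, of Im] by simp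
  then have "2 * pi * (real j - real k) = 2 * pi * (of_int m * real A)"
    using jk unfolding \<theta>_def by (simp add: field_simps)
  then have "real j - real k = of_int m * real A" by simp
  then have diff: "int j - int k = m * int A"
    by (metis of_int_eq_iff of_int_mult of_int_of_nat_eq of_int_diff)
  have "m = 0"
  proof (rule ccontr)
    assume "m \<noteq> 0"
    then have "1 \<le> \<bar>m\<bar>" by linarith
    then have "int A \<le> \<bar>m\<bar> * int A" by (simp add: mult_le_cancel_right1)
    moreover have "\<bar>int j - int k\<bar> < int A" using jk by linarith
    ultimately show False by (simp add: diff abs_mult)
  qed
  then show "j = k" using diff by simp
qed

lemma eventually_less_dist:
  fixes \<omega> :: "nat \<Rightarrow> 'a::metric_space" and f :: "'b \<Rightarrow> real"
  assumes inj: "inj_on \<omega> {..<A}" and f: "(f \<longlongrightarrow> 0) F"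
  shows "\<forall>\<^sub>F x in F. \<forall>j<A. \<forall>k<A. j \<noteq> k \<longrightarrow> f x < dist (\<omega> j) (\<omega> k)"
proof -
  have "\<forall>\<^sub>F x in F. j \<noteq> k \<longrightarrow> f x < dist (\<omega> j) (\<omega> k)" if "j \<in> {..<A}" "k \<in> {..<A}" for j k
  proof (cases "j = k")
    case False
    then have "0 < dist (\<omega> j) (\<omega> k)" using inj that by (auto dest: inj_onD)
    from order_tendstoD(2)[OF f this] show ?thesis by eventually_elim simp
  qed simp
  then have "\<forall>\<^sub>F x in F. \<forall>j\<in>{..<A}. \<forall>k\<in>{..<A}. j \<noteq> k \<longrightarrow> f x < dist (\<omega> j) (\<omega> k)"
    by (intro eventually_ball_finite ballI) auto
  then show ?thesis by (rule eventually_mono) auto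
qed

lemma powr_neg_inverse_power:
  assumes "x > 0"
  shows "(x powr (- 1 / r)) ^ M = inverse (x powr (real M / r))"
proof -
  have "(x powr (- 1 / r)) ^ M = (x powr (- 1 / r)) powr real M"
    using assms by (simp add: powr_realpow)
  also have "\<dots> = x powr (- (real M / r))" by (simp add: powr_powr)
  finally show ?thesis by (simp add: powr_minus)
qed

lemma exp_term_eq_root_series_term:
  assumes A: "A > 0" and n: "n > 0"
  shows "exp_term (int A) u n k (Suc m)
         = root_series A $ Suc m * (of_real (real n powr (- 1 / real A)) * root_direction A u k) ^ Suc m"
proof -
  have "real n powr (real (Suc m) / real A) = inverse ((real n powr (- 1 / real A)) ^ Suc m)"
    using n by (simp only: powr_neg_inverse_power of_nat_0_less_iff inverse_inverse_eq)
  moreover have "exp (\<i> * of_real (real (Suc m) * (2 * pi * real k - pi * real_of_int u) / real A))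
                 = root_direction A u k ^ Suc m"
    unfolding root_direction_def exp_of_nat_mult[symmetric] by (simp add: field_simps)
  ultimately show ?thesis
    unfolding exp_term_def root_series_nth[OF A zero_less_Suc]
    by (simp add: power_mult_distrib divide_inverse)
qed

lemma exp_term_sums:
  assumes A: "A > 0" and n: "n > 0" and \<rho>: "\<rho> = real n powr (- 1 / real A)" "\<rho> < 1/4"
  shows "(\<lambda>m. exp_term (int A) u n k (Suc m))
           sums eval_fps (root_series A) (of_real \<rho> * root_direction A u k)"
  unfolding exp_term_eq_root_series_term[OF A n] \<rho>(1)[symmetric]
  using \<rho> by (intro root_series_sums A) (simp add: norm_mult)

lemma p_poly_one_plus_root_series_eq_0:
  assumes A: "A > 0" and n: "n > 0" and \<rho>: "\<rho> = real n powr (- 1 / real A)" "\<rho> < 1/4"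
  shows "p_poly (int A) u n (1 + eval_fps (root_series A) (of_real \<rho> * root_direction A u k)) = 0"
proof -
  define \<epsilon> where "\<epsilon> = of_real \<rho> * root_direction A u k"
  define w where "w = eval_fps (root_series A) \<epsilon>"
  have "exp (\<i> * of_real (pi * real_of_int u)) * of_nat n * \<epsilon> ^ A = 1"
  proof -
    have "\<rho> ^ A = inverse (real n powr (real A / real A))"
      unfolding \<rho> by (rule powr_neg_inverse_power) (use n in simp)
    then have "real n * \<rho> ^ A = 1" using A n by simp
    then have n\<rho>: "of_nat n * of_real \<rho> ^ A = (1 :: complex)"
      by (metis of_real_1 of_real_mult of_real_of_nat_eq of_real_power)
    have "exp (\<i> * of_real (pi * real_of_int u)) * of_nat n * \<epsilon> ^ A
        = (of_nat n * of_real \<rho> ^ A) * (exp (\<i> * of_real (pi * real_of_int u)) * root_direction A u k ^ A)"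
      by (simp add: \<epsilon>_def power_mult_distrib mult_ac)
    also have "\<dots> = 1" by (simp only: n\<rho> root_direction_power[OF A] mult_1)
    finally show ?thesis .
  qed
  moreover have "w ^ A = \<epsilon> ^ A * (1 + w) ^ (A - 1)"
    unfolding w_def using \<rho> n
    by (intro eval_root_series_equation A) (simp add: \<epsilon>_def norm_mult)
  ultimately show ?thesis
    unfolding p_poly_def w_def[symmetric] \<epsilon>_def[symmetric]
    by (simp add: mult.assoc[symmetric])
qed

lemma p_poly_eq_prod_distinct_roots:
  assumes A: "A > 0" and n: "n > 0"
    and inj: "inj_on r {..<A}" and roots: "\<And>k. k < A \<Longrightarrow> p_poly (int A) u n (r k) = 0"
  shows "p_poly (int A) u n \<tau> = exp (\<i> * of_real (pi * real_of_int u)) * of_nat n * (\<Prod>k<A. \<tau> - r k)"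
proof -
  define c where "c = exp (\<i> * of_real (pi * real_of_int u)) * of_nat n"
  have c: "c \<noteq> 0" using n by (simp add: c_def)
  define P :: "complex poly" where "P = smult c ([:-1, 1:] ^ A) + - monom 1 (A - 1)"
  have poly_P: "poly P x = p_poly (int A) u n x" for x
    by (simp add: P_def p_poly_def c_def poly_monom)
  have "degree (smult c ([:-1, 1:] ^ A)) = A" using c by (simp add: degree_linear_power)
  then have deg: "degree P = A"
    unfolding P_def using A by (subst degree_add_eq_left) (auto simp: degree_monom_eq)
  have "lead_coeff P = c"
    unfolding deg using A lead_coeff_power[of "[:-1, 1::complex:]" A]
    by (simp add: P_def coeff_monom degree_linear_power)
  then have "P = smult c (\<Prod>x\<in>r ` {..<A}. [:-x, 1:])"
    using poly_eq_smult_prod_roots[of "r ` {..<A}" P] inj roots deg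
    by (auto simp: card_image poly_P)
  then have "poly P \<tau> = c * (\<Prod>k<A. \<tau> - r k)"
    by (simp add: poly_prod prod.reindex[OF inj])
  then show ?thesis by (simp add: poly_P c_def)
qed

lemma p_poly_eq_prod_root_series:
  assumes A: "A > 0" and n: "n > 0" and \<rho>: "\<rho> = real n powr (- 1 / real A)" "\<rho> < 1/8"
    and sep: "\<forall>j<A. \<forall>k<A. j \<noteq> k \<longrightarrow>
                64 * \<rho> < dist (root_direction A u j) (root_direction A u k)"
  shows "p_poly (int A) u n \<tau> = exp (\<i> * of_real (pi * real_of_int u)) * of_nat n
           * (\<Prod>k<A. \<tau> - (1 + eval_fps (root_series A) (of_real \<rho> * root_direction A u k)))"
proof (rule p_poly_eq_prod_distinct_roots[OF A n])
  have "\<rho> > 0" using n by (simp add: \<rho>)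
  then have "eval_fps (root_series A) (of_real \<rho> * root_direction A u j)
             \<noteq> eval_fps (root_series A) (of_real \<rho> * root_direction A u k)"
    if "j < A" "k < A" "j \<noteq> k" for j k
    using \<rho>(2) sep that by (intro eval_root_series_neq A) (auto simp: dist_norm)
  then show "inj_on (\<lambda>k. 1 + eval_fps (root_series A) (of_real \<rho> * root_direction A u k)) {..<A}"
    by (auto simp: inj_on_def)
  show "p_poly (int A) u n (1 + eval_fps (root_series A) (of_real \<rho> * root_direction A u k)) = 0" for k
    using \<rho> by (intro p_poly_one_plus_root_series_eq_0 A n) auto
qed

theorem lemma7:
  fixes a u :: int
  assumes "a \<ge> 2" and "\<bar>u\<bar> \<le> a"
  shows "\<exists>N::nat. \<forall>n::nat. n \<ge> N \<and> n \<ge> 1 \<longrightarrow>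
           (\<forall>k < nat a. summable (\<lambda>m. exp_term a u n k (Suc m))) \<and>
           (\<forall>\<tau>. p_poly a u n \<tau> =
                  exp (\<i> * of_real (pi * real_of_int u)) * of_nat n
                  * (\<Prod>k<nat a. \<tau> - (1 + (\<Sum>m. exp_term a u n k (Suc m)))))"
proof -
  define A where "A = nat a"
  have A: "A > 0" and a: "a = int A" using assms(1) by (simp_all add: A_def)
  define \<omega> where "\<omega> = root_direction A u"
  define \<rho> where "\<rho> n = real n powr (- 1 / real A)" for n :: nat
  have \<rho>_lim: "(\<rho> \<longlongrightarrow> 0) sequentially"
    unfolding \<rho>_def using A by (intro tendsto_neg_powr filterlim_real_sequentially) simp
  then have "((\<lambda>n. 64 * \<rho> n) \<longlongrightarrow> 0) sequentially" by (rule tendsto_mult_right_zero)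
  from \<rho>_lim eventually_less_dist[OF inj_on_root_direction this]
  have "\<forall>\<^sub>F n in sequentially. \<rho> n < 1/8 \<and>
          (\<forall>j<A. \<forall>k<A. j \<noteq> k \<longrightarrow> 64 * \<rho> n < dist (\<omega> j) (\<omega> k))"
    by (intro eventually_conj order_tendstoD(2)) (auto simp: \<omega>_def)
  then obtain N where N: "\<And>n. n \<ge> N \<Longrightarrow> \<rho> n < 1/8 \<and>
          (\<forall>j<A. \<forall>k<A. j \<noteq> k \<longrightarrow> 64 * \<rho> n < dist (\<omega> j) (\<omega> k))"
    unfolding eventually_sequentially by blast
  show ?thesis
  proof (intro exI[of _ N] allI impI)
    fix n assume "N \<le> n \<and> 1 \<le> n"
    then have n: "n > 0" "\<rho> n < 1/8" "\<forall>j<A. \<forall>k<A. j \<noteq> k \<longrightarrow> 64 * \<rho> n < dist (\<omega> j) (\<omega> k)"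
      using N by auto
    define z where "z k = eval_fps (root_series A) (of_real (\<rho> n) * \<omega> k)" for k
    have sums: "(\<lambda>m. exp_term a u n k (Suc m)) sums z k" for k
      using n unfolding a z_def \<omega>_def by (intro exp_term_sums A) (auto simp: \<rho>_def)
    have "p_poly a u n \<tau> = exp (\<i> * of_real (pi * real_of_int u)) * of_nat n * (\<Prod>k<A. \<tau> - (1 + z k))"
      for \<tau> using n unfolding a z_def \<omega>_def by (intro p_poly_eq_prod_root_series A) (auto simp: \<rho>_def)
    then show "(\<forall>k < nat a. summable (\<lambda>m. exp_term a u n k (Suc m))) \<and>
           (\<forall>\<tau>. p_poly a u n \<tau> = exp (\<i> * of_real (pi * real_of_int u)) * of_nat n
                  * (\<Prod>k<nat a. \<tau> - (1 + (\<Sum>m. exp_term a u n k (Suc m)))))"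
      using sums_summable[OF sums] sums_unique[OF sums] by (simp add: A_def)
  qed
qed

end
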